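(* For every integer $k\ge 4$, there exists a graph $H$ of order $k$ and at least two distinct positive integers $n$ such that, for each such $n$, there exists a graph of order $n$ and size $\mathrm{ex}(n,H)+1$ which contains exactly one copy of $H$.
   Context: All graphs are finite and simple. The order of a graph is its number of vertices and its size is its number of edges. A copy of $H$ in $G$ is a subgraph of $G$ isomorphic to $H$; the number of copies of $H$ in $G$ is the number of distinct subgraphs of $G$ isomorphic to $H$. For a graph $H$ and a positive integer $n$, the Turán number $\mathrm{ex}(n,H)$ is the maximum size of a simple graph of order $n$ containing no copy of $H$. *)

theory Defs
  imports Main
begin

definition simple_graph :: "'a set \<Rightarrow> 'a set set \<Rightarrow> bool" where
  "simple_graph V E \<longleftrightarrow> finite V \<and>
     E \<subseteq> {e. \<exists>x y. x \<in> V \<and> y \<in> V \<and> x \<noteq> y \<and> e = {x, y}}"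

definition graph_iso :: "'a set \<times> 'a set set \<Rightarrow> 'b set \<times> 'b set set \<Rightarrow> bool" where
  "graph_iso G H \<longleftrightarrow> (\<exists>f. bij_betw f (fst G) (fst H) \<and>
     (\<forall>x\<in>fst G. \<forall>y\<in>fst G. {x, y} \<in> snd G \<longleftrightarrow> {f x, f y} \<in> snd H))"

definition copies :: "'a set \<times> 'a set set \<Rightarrow> 'b set \<times> 'b set set \<Rightarrow> ('a set \<times> 'a set set) set" where
  "copies G H = {(V', E'). V' \<subseteq> fst G \<and> E' \<subseteq> snd G \<and> simple_graph V' E' \<and> graph_iso (V', E') H}"

definition contains :: "'a set \<times> 'a set set \<Rightarrow> 'b set \<times> 'b set set \<Rightarrow> bool" where
  "contains G H \<longleftrightarrow> copies G H \<noteq> {}"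

text \<open>Turan number: maximum size of an H-free simple graph of order n
  (graphs of order n are taken on the vertex set {..<n}, without loss of generality).\<close>

definition ex :: "nat \<Rightarrow> 'b set \<times> 'b set set \<Rightarrow> nat" where
  "ex n H = Max {card E | E. simple_graph {..<n} E \<and> \<not> contains ({..<n}, E) H}"

end

theory Submission
  imports Defs
begin

text \<open>The graph \<open>H\<close> is a complete split graph (a clique joined to an independent set): the star
  with \<open>k - 1\<close> leaves for odd \<open>k = 2m + 1\<close>, and the book of \<open>k - 2\<close> triangles on a common
  edge (the spine) for even \<open>k = 2m\<close>.

  A graph contains the star iff some vertex has degree \<open>k - 1\<close>, so by the handshake lemma
  \<open>2 ex(n, H) \<le> n (k - 2)\<close>. For \<open>n = k\<close> and \<open>n = 2k - 1\<close> this bound is attained by the complete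
  graph on \<open>k\<close> vertices minus a matching covering every vertex (plus a disjoint clique on \<open>k - 1\<close>
  vertices). Deleting instead a matching that misses one vertex gives one more edge and exactly one
  vertex of degree \<open>k - 1\<close>, hence exactly one star.

  On \<open>k\<close> vertices a book is the same as two universal vertices, so a book-free graph has at most
  one universal vertex: the complete graph minus a perfect matching is extremal, and the complete
  graph minus a matching missing two vertices has exactly one book. On \<open>k + 1\<close> vertices a book is
  an edge whose endpoints have all their non-neighbours in one common vertex. Counting non-degrees
  shows that at most \<open>(k + 2) / 2\<close> non-edges force a book, so the complete graph minus a triangle
  and a matching is extremal, whereas the complete graph minus a path with two edges and a matching
  contains exactly one book.\<close>

section \<open>Edges and neighbourhoods\<close>

definition all_edges :: "'a set \<Rightarrow> 'a set set" where
  "all_edges V = {e. \<exists>x y. x \<in> V \<and> y \<in> V \<and> x \<noteq> y \<and> e = {x, y}}"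

definition neighbours :: "'a set \<Rightarrow> 'a set set \<Rightarrow> 'a \<Rightarrow> 'a set" where
  "neighbours V E v = {u \<in> V. {u, v} \<in> E}"

definition non_neighbours :: "'a set \<Rightarrow> 'a set set \<Rightarrow> 'a \<Rightarrow> 'a set" where
  "non_neighbours V E v = {u \<in> V. u \<noteq> v \<and> {u, v} \<notin> E}"

lemma simple_graph_iff_all_edges: "simple_graph V E \<longleftrightarrow> finite V \<and> E \<subseteq> all_edges V"
  unfolding simple_graph_def all_edges_def by auto

lemma doubleton_in_all_edges_iff [simp]: "{a, b} \<in> all_edges V \<longleftrightarrow> a \<noteq> b \<and> a \<in> V \<and> b \<in> V"
  unfolding all_edges_def by (auto simp: doubleton_eq_iff)

lemma all_edges_mono: "A \<subseteq> B \<Longrightarrow> all_edges A \<subseteq> all_edges B"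
  unfolding all_edges_def by blast

lemma all_edges_disjoint: "A \<inter> B = {} \<Longrightarrow> all_edges A \<inter> all_edges B = {}"
  unfolding all_edges_def by (auto simp: doubleton_eq_iff)

lemma all_edges_eq: "all_edges V = {e. e \<subseteq> V \<and> card e = 2}"
  unfolding all_edges_def by (auto simp: card_2_iff)

lemma finite_all_edges: "finite V \<Longrightarrow> finite (all_edges V)"
  unfolding all_edges_eq by simp

lemma card_all_edges: "finite V \<Longrightarrow> card (all_edges V) = card V choose 2"
  unfolding all_edges_eq by (rule n_subsets)

lemma card_all_edges_Diff:
  assumes "finite V" "M \<subseteq> all_edges V"
  shows "card (all_edges V - M) = (card V choose 2) - card M"
  using assms by (simp add: card_Diff_subset finite_subset[OF _ finite_all_edges] card_all_edges)

lemma finite_neighbours: "finite V \<Longrightarrow> finite (neighbours V E v)"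
  unfolding neighbours_def by simp

lemma finite_non_neighbours: "finite V \<Longrightarrow> finite (non_neighbours V E v)"
  unfolding non_neighbours_def by simp

lemma singleton_notin_all_edges [simp]: "{v} \<notin> all_edges V"
  unfolding all_edges_def by (auto simp: doubleton_eq_iff)

lemma neighbours_subset: "E \<subseteq> all_edges V \<Longrightarrow> neighbours V E v \<subseteq> V - {v}"
  unfolding neighbours_def by auto

lemma non_neighbours_commute: "u \<in> non_neighbours V E v \<Longrightarrow> v \<in> V \<Longrightarrow> v \<in> non_neighbours V E u"
  unfolding non_neighbours_def by (auto simp: insert_commute)

lemma neighbours_all_edges_Diff:
  "v \<in> V \<Longrightarrow> neighbours V (all_edges V - M) v = V - {v} - neighbours V M v"
  unfolding neighbours_def by auto

lemma non_neighbours_all_edges_Diff: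
  "M \<subseteq> all_edges V \<Longrightarrow> v \<in> V \<Longrightarrow> non_neighbours V (all_edges V - M) v = neighbours V M v"
  unfolding neighbours_def non_neighbours_def by auto

lemma card_neighbours_all_edges_Diff:
  assumes "finite V" "M \<subseteq> all_edges V" "v \<in> V"
  shows "card (neighbours V (all_edges V - M) v) = card V - 1 - card (neighbours V M v)"
  using assms neighbours_subset[OF assms(2), of v]
  by (simp add: neighbours_all_edges_Diff card_Diff_subset finite_neighbours)

lemma sum_card_neighbours:
  assumes "finite V" "E \<subseteq> all_edges V"
  shows "(\<Sum>v\<in>V. card (neighbours V E v)) = 2 * card E"
proof -
  have fin: "finite E" using assms finite_all_edges finite_subset by blast
  have "card (neighbours V E v) = card {e \<in> E. v \<in> e}" if "v \<in> V" for v
  proof -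
    have "inj_on (\<lambda>u. {u, v}) (neighbours V E v)"
      by (auto simp: inj_on_def doubleton_eq_iff)
    moreover have "(\<lambda>u. {u, v}) ` neighbours V E v = {e \<in> E. v \<in> e}"
      using assms(2) unfolding neighbours_def all_edges_def
      by (force simp: insert_commute)
    ultimately show ?thesis by (metis card_image)
  qed
  then have "(\<Sum>v\<in>V. card (neighbours V E v)) = (\<Sum>v\<in>V. card {e \<in> E. v \<in> e})"
    by simp
  also have "\<dots> = (\<Sum>e\<in>E. card {v \<in> V. v \<in> e})"
    using sum.swap_restrict[OF assms(1) fin, of "\<lambda>_ _. 1::nat" "\<lambda>v e. v \<in> e"] by simp
  also have "\<dots> = (\<Sum>e\<in>E. 2)"
  proof (rule sum.cong)
    fix e assume "e \<in> E"
    then have "e \<subseteq> V" "card e = 2" using assms(2) unfolding all_edges_eq by auto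
    then show "card {v \<in> V. v \<in> e} = 2" by (simp add: Int_absorb1 Collect_conj_eq Int_commute)
  qed simp
  finally show ?thesis by simp
qed

lemma neighbours_mono: "E \<subseteq> E' \<Longrightarrow> neighbours V E v \<subseteq> neighbours V E' v"
  unfolding neighbours_def by auto

lemma neighbours_Un: "neighbours V (E \<union> F) v = neighbours V E v \<union> neighbours V F v"
  unfolding neighbours_def by auto

lemma neighbours_Un_all_edges:
  assumes "E \<subseteq> all_edges V" "V \<inter> C = {}"
  shows "neighbours (V \<union> C) (E \<union> all_edges C) v = (if v \<in> C then C - {v} else neighbours V E v)"
proof -
  have "v \<in> V" if "{u, v} \<in> E" for u using that assms(1) by auto
  then show ?thesis using assms unfolding neighbours_def by auto
qed

lemma Un_all_edges_subset: "E \<subseteq> all_edges V \<Longrightarrow> E \<union> all_edges C \<subseteq> all_edges (V \<union> C)"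
  using all_edges_mono[of V "V \<union> C"] all_edges_mono[of C "V \<union> C"] by blast

lemma card_Un_all_edges:
  assumes "finite V" "finite C" "E \<subseteq> all_edges V" "V \<inter> C = {}"
  shows "card (E \<union> all_edges C) = card E + (card C choose 2)"
proof -
  have "E \<inter> all_edges C = {}" using assms(3,4) all_edges_disjoint by blast
  then show ?thesis
    using assms finite_subset[OF assms(3) finite_all_edges]
    by (simp add: card_Un_disjoint finite_all_edges card_all_edges)
qed

lemma non_neighbours_eq_neighbours_complement:
  "v \<in> V \<Longrightarrow> non_neighbours V E v = neighbours V (all_edges V - E) v"
  unfolding neighbours_def non_neighbours_def by auto

lemma sum_card_non_neighbours:
  assumes "finite V"
  shows "(\<Sum>v\<in>V. card (non_neighbours V E v)) = 2 * card (all_edges V - E)"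
  using sum_card_neighbours[OF assms, of "all_edges V - E"]
  by (simp add: non_neighbours_eq_neighbours_complement)

section \<open>Copies of complete split graphs\<close>

definition edges_meeting :: "'a set \<Rightarrow> 'a set \<Rightarrow> 'a set set" where
  "edges_meeting V T = {e \<in> all_edges V. e \<inter> T \<noteq> {}}"

text \<open>The clique \<open>{..<t}\<close> completely joined to the independent set \<open>{t..<k}\<close>: the star for
  \<open>t = 1\<close>, the book for \<open>t = 2\<close>.\<close>

definition split_graph :: "nat \<Rightarrow> nat \<Rightarrow> nat set set" where
  "split_graph t k = edges_meeting {..<k} {..<t}"

text \<open>\<open>T\<close> and \<open>S\<close> are the images of the clique part and of the independent part of a copy.\<close>

definition split_copy :: "'a set \<Rightarrow> 'a set set \<Rightarrow> nat \<Rightarrow> nat \<Rightarrow> 'a set \<Rightarrow> 'a set \<Rightarrow> bool" where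
  "split_copy V E t k T S \<longleftrightarrow> T \<subseteq> V \<and> S \<subseteq> V \<and> T \<inter> S = {} \<and> card T = t \<and> card S = k - t \<and>
     edges_meeting (T \<union> S) T \<subseteq> E"

lemma doubleton_in_edges_meeting_iff [simp]:
  "{a, b} \<in> edges_meeting V T \<longleftrightarrow> a \<noteq> b \<and> a \<in> V \<and> b \<in> V \<and> (a \<in> T \<or> b \<in> T)"
  unfolding edges_meeting_def by auto

lemma edges_meeting_subset_all_edges: "edges_meeting V T \<subseteq> all_edges V"
  unfolding edges_meeting_def by auto

lemma edges_meeting_subset_iff:
  "edges_meeting V T \<subseteq> E \<longleftrightarrow> (\<forall>x\<in>T \<inter> V. \<forall>y\<in>V. x \<noteq> y \<longrightarrow> {x, y} \<in> E)"
proof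
  assume "edges_meeting V T \<subseteq> E"
  then show "\<forall>x\<in>T \<inter> V. \<forall>y\<in>V. x \<noteq> y \<longrightarrow> {x, y} \<in> E" by auto
next
  assume E: "\<forall>x\<in>T \<inter> V. \<forall>y\<in>V. x \<noteq> y \<longrightarrow> {x, y} \<in> E"
  show "edges_meeting V T \<subseteq> E"
  proof
    fix e assume "e \<in> edges_meeting V T"
    then obtain x y where "x \<in> V" "y \<in> V" "x \<noteq> y" "x \<in> T \<or> y \<in> T" "e = {x, y}"
      unfolding edges_meeting_def all_edges_def by auto
    then show "e \<in> E" using E by (metis IntI insert_commute)
  qed
qed

lemma simple_graph_split_graph: "simple_graph {..<k} (split_graph t k)"
  unfolding simple_graph_iff_all_edges split_graph_def using edges_meeting_subset_all_edges by auto

lemma graph_iso_edges_meeting: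
  assumes "bij_betw f V W" and "\<And>x. x \<in> V \<Longrightarrow> x \<in> T \<longleftrightarrow> f x \<in> T'"
  shows "graph_iso (V, edges_meeting V T) (W, edges_meeting W T')"
proof -
  have "x \<noteq> y \<longleftrightarrow> f x \<noteq> f y" if "x \<in> V" "y \<in> V" for x y
    using assms(1) that by (metis bij_betw_iff_bijections)
  moreover have "f x \<in> W" if "x \<in> V" for x
    using assms(1) that by (simp add: bij_betw_apply)
  ultimately show ?thesis
    unfolding graph_iso_def using assms by (intro exI[of _ f]) auto
qed

lemma edges_eq_edges_meeting_if_iso:
  assumes "E \<subseteq> all_edges V" and "bij_betw f V W"
    and "\<And>x y. x \<in> V \<Longrightarrow> y \<in> V \<Longrightarrow> {x, y} \<in> E \<longleftrightarrow> {f x, f y} \<in> edges_meeting W T'"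
  shows "E = edges_meeting V {x \<in> V. f x \<in> T'}"
proof -
  have "x \<noteq> y \<longleftrightarrow> f x \<noteq> f y" if "x \<in> V" "y \<in> V" for x y
    using assms(2) that by (metis bij_betw_iff_bijections)
  moreover have "f x \<in> W" if "x \<in> V" for x
    using assms(2) that by (simp add: bij_betw_apply)
  ultimately have "{x, y} \<in> E \<longleftrightarrow> {x, y} \<in> edges_meeting V {x \<in> V. f x \<in> T'}" if "x \<in> V" "y \<in> V" for x y
    using assms(3) that by auto
  moreover have "E \<subseteq> {{x, y} |x y. x \<in> V \<and> y \<in> V}"
    "edges_meeting V T'' \<subseteq> {{x, y} |x y. x \<in> V \<and> y \<in> V}" for T''
    using assms(1) edges_meeting_subset_all_edges unfolding all_edges_def by blast+
  ultimately show ?thesis by blast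
qed

lemma split_copy_if_mem_copies:
  assumes "t \<le> k" "(V', E') \<in> copies (V, E) ({..<k}, split_graph t k)"
  shows "\<exists>T. split_copy V E t k T (V' - T) \<and> T \<subseteq> V' \<and> E' = edges_meeting V' T"
proof -
  obtain f where "V' \<subseteq> V" "E' \<subseteq> E" "E' \<subseteq> all_edges V'" and f: "bij_betw f V' {..<k}"
    and adj: "\<And>x y. x \<in> V' \<Longrightarrow> y \<in> V' \<Longrightarrow> {x, y} \<in> E' \<longleftrightarrow> {f x, f y} \<in> split_graph t k"
    using assms(2) unfolding copies_def graph_iso_def simple_graph_iff_all_edges by auto
  define T where "T = {x \<in> V'. f x \<in> {..<t}}"
  have E': "E' = edges_meeting V' T"
    unfolding T_def using \<open>E' \<subseteq> all_edges V'\<close> f adj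
    by (intro edges_eq_edges_meeting_if_iso) (auto simp: split_graph_def)
  have "f ` V' = {..<k}" "inj_on f V'" using f by (auto simp: bij_betw_def)
  have image_filter: "f ` {x \<in> V'. f x \<in> A} = f ` V' \<inter> A" for A
    by auto
  have "V' - T = {x \<in> V'. f x \<in> - {..<t}}" unfolding T_def by auto
  then have "f ` T = {..<k} \<inter> {..<t}" "f ` (V' - T) = {..<k} \<inter> - {..<t}"
    unfolding T_def by (simp_all only: image_filter \<open>f ` V' = {..<k}\<close>)
  then have "f ` T = {..<t}" "f ` (V' - T) = {t..<k}"
    using assms(1) by auto
  then have "bij_betw f T {..<t}" "bij_betw f (V' - T) {t..<k}"
    using \<open>inj_on f V'\<close> unfolding bij_betw_def T_def by (auto intro: inj_on_subset)
  then have "card T = t" "card (V' - T) = k - t"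
    by (simp_all add: bij_betw_same_card)
  then have "split_copy V E t k T (V' - T)"
    unfolding split_copy_def using \<open>V' \<subseteq> V\<close> \<open>E' \<subseteq> E\<close> E' T_def by (auto simp: Un_absorb1)
  moreover have "T \<subseteq> V'" unfolding T_def by blast
  ultimately show ?thesis using E' by blast
qed

lemma mem_copies_if_split_copy:
  assumes "finite V" "t \<le> k" "split_copy V E t k T S"
  shows "(T \<union> S, edges_meeting (T \<union> S) T) \<in> copies (V, E) ({..<k}, split_graph t k)"
proof -
  have fin: "finite T" "finite S"
    using assms(1,3) finite_subset unfolding split_copy_def by blast+
  obtain g where g: "bij_betw g T {..<t}"
    using assms(3) fin finite_same_card_bij[of T "{..<t}"] unfolding split_copy_def by auto
  obtain h where h: "bij_betw h S {t..<k}"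
    using assms(3) fin finite_same_card_bij[of S "{t..<k}"] unfolding split_copy_def by auto
  define f where "f x = (if x \<in> T then g x else h x)" for x
  have f_T: "bij_betw f T {..<t}"
    using g by (rule bij_betw_cong[THEN iffD1, rotated]) (simp add: f_def)
  moreover have f_S: "bij_betw f S {t..<k}"
    using h assms(3) unfolding split_copy_def by (intro bij_betw_cong[THEN iffD1, OF _ h]) (auto simp: f_def)
  ultimately have "bij_betw f (T \<union> S) ({..<t} \<union> {t..<k})"
    by (rule bij_betw_combine) auto
  moreover have "{..<t} \<union> {t..<k} = {..<k}" using assms(2) by auto
  ultimately have f: "bij_betw f (T \<union> S) {..<k}" by simp
  have "x \<in> T \<longleftrightarrow> f x \<in> {..<t}" if "x \<in> T \<union> S" for x
    using that f_T f_S by (auto dest: bij_betw_apply)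
  then have "graph_iso (T \<union> S, edges_meeting (T \<union> S) T) ({..<k}, split_graph t k)"
    unfolding split_graph_def using f by (rule graph_iso_edges_meeting[rotated])
  moreover have "simple_graph (T \<union> S) (edges_meeting (T \<union> S) T)"
    using fin edges_meeting_subset_all_edges unfolding simple_graph_iff_all_edges by blast
  ultimately show ?thesis
    using assms(3) unfolding copies_def split_copy_def by auto
qed

lemma copies_split_graph:
  assumes "finite V" "t \<le> k"
  shows "copies (V, E) ({..<k}, split_graph t k) =
    (\<lambda>(T, S). (T \<union> S, edges_meeting (T \<union> S) T)) ` {(T, S). split_copy V E t k T S}"
proof (intro equalityI subsetI)
  fix c assume "c \<in> copies (V, E) ({..<k}, split_graph t k)"
  moreover obtain V' E' where "c = (V', E')" by fastforce
  ultimately obtain T where "split_copy V E t k T (V' - T)" "T \<subseteq> V'" "E' = edges_meeting V' T"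
    using split_copy_if_mem_copies[OF assms(2)] by blast
  moreover have "V' = T \<union> (V' - T)" using \<open>T \<subseteq> V'\<close> by blast
  ultimately show "c \<in> (\<lambda>(T, S). (T \<union> S, edges_meeting (T \<union> S) T)) ` {(T, S). split_copy V E t k T S}"
    using \<open>c = (V', E')\<close> by (auto intro!: image_eqI[where x = "(T, V' - T)"])
next
  fix c assume "c \<in> (\<lambda>(T, S). (T \<union> S, edges_meeting (T \<union> S) T)) ` {(T, S). split_copy V E t k T S}"
  then obtain T S where "c = (T \<union> S, edges_meeting (T \<union> S) T)" "split_copy V E t k T S" by auto
  then show "c \<in> copies (V, E) ({..<k}, split_graph t k)" using mem_copies_if_split_copy[OF assms] by simp
qed

lemma contains_split_graph_iff:
  assumes "finite V" "t \<le> k"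
  shows "contains (V, E) ({..<k}, split_graph t k) \<longleftrightarrow> (\<exists>T S. split_copy V E t k T S)"
  unfolding contains_def copies_split_graph[OF assms] by auto

lemma card_copies_split_graph_eq_1:
  assumes "finite V" "t \<le> k" "{(T, S). split_copy V E t k T S} = {(T\<^sub>0, S\<^sub>0)}"
  shows "card (copies (V, E) ({..<k}, split_graph t k)) = 1"
  unfolding copies_split_graph[OF assms(1,2)] assms(3) by simp

section \<open>Stars\<close>

lemma split_copy_star_iff:
  assumes "E \<subseteq> all_edges V"
  shows "split_copy V E 1 k T S \<longleftrightarrow> (\<exists>c\<in>V. T = {c} \<and> S \<subseteq> neighbours V E c \<and> card S = k - 1)"
proof
  assume "split_copy V E 1 k T S"
  then obtain c where "c \<in> V" "T = {c}" "c \<notin> S" "S \<subseteq> V" "card S = k - 1"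
      "edges_meeting ({c} \<union> S) {c} \<subseteq> E"
    unfolding split_copy_def by (auto simp: card_1_singleton_iff)
  moreover from this have "S \<subseteq> neighbours V E c"
    unfolding edges_meeting_subset_iff neighbours_def by (auto simp: insert_commute)
  ultimately show "\<exists>c\<in>V. T = {c} \<and> S \<subseteq> neighbours V E c \<and> card S = k - 1" by blast
next
  assume "\<exists>c\<in>V. T = {c} \<and> S \<subseteq> neighbours V E c \<and> card S = k - 1"
  then obtain c where c: "c \<in> V" "T = {c}" "S \<subseteq> neighbours V E c" "card S = k - 1" by blast
  moreover have "S \<subseteq> V - {c}" using c(3) neighbours_subset[OF assms] by blast
  moreover have "edges_meeting ({c} \<union> S) {c} \<subseteq> E"
    using c(3) unfolding edges_meeting_subset_iff neighbours_def by (auto simp: insert_commute)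
  ultimately show "split_copy V E 1 k T S" unfolding split_copy_def by auto
qed

lemma contains_star_iff:
  assumes "finite V" "E \<subseteq> all_edges V" "1 \<le> k"
  shows "contains (V, E) ({..<k}, split_graph 1 k) \<longleftrightarrow> (\<exists>c\<in>V. k - 1 \<le> card (neighbours V E c))"
proof -
  have "(\<exists>S. S \<subseteq> neighbours V E c \<and> card S = k - 1) \<longleftrightarrow> k - 1 \<le> card (neighbours V E c)" for c
  proof
    assume "\<exists>S. S \<subseteq> neighbours V E c \<and> card S = k - 1"
    then obtain S where "S \<subseteq> neighbours V E c" "card S = k - 1" by blast
    then show "k - 1 \<le> card (neighbours V E c)"
      using card_mono[OF finite_neighbours[OF assms(1)]] by metis
  next
    assume "k - 1 \<le> card (neighbours V E c)"
    then show "\<exists>S. S \<subseteq> neighbours V E c \<and> card S = k - 1"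
      by (rule obtain_subset_with_card_n) blast
  qed
  then show ?thesis
    unfolding contains_split_graph_iff[OF assms(1,3)] split_copy_star_iff[OF assms(2)]
    by (metis singletonI)
qed

lemma card_edges_le_if_star_free:
  assumes "finite V" "E \<subseteq> all_edges V" "1 \<le> k"
    and "\<not> contains (V, E) ({..<k}, split_graph 1 k)"
  shows "2 * card E \<le> card V * (k - 2)"
proof -
  have "card (neighbours V E v) \<le> k - 2" if "v \<in> V" for v
    using that assms(4) unfolding contains_star_iff[OF assms(1-3)] by auto
  then have "(\<Sum>v\<in>V. card (neighbours V E v)) \<le> card V * (k - 2)"
    using sum_bounded_above[of V "\<lambda>v. card (neighbours V E v)" "k - 2"] by simp
  then show ?thesis using sum_card_neighbours[OF assms(1,2)] by simp
qed

lemma card_copies_star_eq_1: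
  assumes "finite V" "E \<subseteq> all_edges V" "1 \<le> k"
    and "c \<in> V" "card (neighbours V E c) = k - 1"
    and "\<And>v. v \<in> V \<Longrightarrow> v \<noteq> c \<Longrightarrow> card (neighbours V E v) < k - 1"
  shows "card (copies (V, E) ({..<k}, split_graph 1 k)) = 1"
proof (rule card_copies_split_graph_eq_1[OF assms(1,3)])
  have "split_copy V E 1 k T S \<longleftrightarrow> T = {c} \<and> S = neighbours V E c" for T S
  proof
    assume "split_copy V E 1 k T S"
    then obtain c' where c': "c' \<in> V" "T = {c'}" "S \<subseteq> neighbours V E c'" "card S = k - 1"
      unfolding split_copy_star_iff[OF assms(2)] by blast
    moreover have "card S \<le> card (neighbours V E c')"
      using c'(3) assms(1) by (simp add: card_mono finite_neighbours)
    ultimately have "c' = c" using assms(6)[of c'] by linarith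
    then show "T = {c} \<and> S = neighbours V E c"
      using c' assms(1,5) by (simp add: card_subset_eq finite_neighbours)
  next
    assume "T = {c} \<and> S = neighbours V E c"
    then show "split_copy V E 1 k T S"
      unfolding split_copy_star_iff[OF assms(2)] using assms(4,5) by blast
  qed
  then show "{(T, S). split_copy V E 1 k T S} = {({c}, neighbours V E c)}" by auto
qed

section \<open>Books\<close>

definition universal_vertices :: "'a set \<Rightarrow> 'a set set \<Rightarrow> 'a set" where
  "universal_vertices V E = {v \<in> V. neighbours V E v = V - {v}}"

lemma universal_vertices_all_edges_Diff:
  assumes "M \<subseteq> all_edges V"
  shows "universal_vertices V (all_edges V - M) = {v \<in> V. neighbours V M v = {}}"
proof -
  have "V - {v} - neighbours V M v = V - {v} \<longleftrightarrow> neighbours V M v = {}" for v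
    using neighbours_subset[OF assms, of v] by (metis Diff_disjoint Diff_empty Int_absorb2)
  then show ?thesis
    unfolding universal_vertices_def
    by (intro Collect_cong conj_cong refl) (simp_all add: neighbours_all_edges_Diff)
qed

lemma split_copy_book_iff:
  assumes "E \<subseteq> all_edges V"
  shows "split_copy V E 2 k T S \<longleftrightarrow>
    (\<exists>a b. {a, b} \<in> E \<and> T = {a, b} \<and> S \<subseteq> neighbours V E a \<inter> neighbours V E b \<and> card S = k - 2)"
proof
  assume "split_copy V E 2 k T S"
  then obtain a b where ab: "a \<noteq> b" "T = {a, b}" "{a, b} \<subseteq> V" "S \<subseteq> V" "a \<notin> S" "b \<notin> S"
      "card S = k - 2" "edges_meeting ({a, b} \<union> S) {a, b} \<subseteq> E"
    unfolding split_copy_def by (auto simp: card_2_iff)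
  then have "{a, b} \<in> E" "S \<subseteq> neighbours V E a \<inter> neighbours V E b"
    unfolding edges_meeting_subset_iff neighbours_def by (auto simp: insert_commute)
  with ab show "\<exists>a b. {a, b} \<in> E \<and> T = {a, b} \<and> S \<subseteq> neighbours V E a \<inter> neighbours V E b \<and> card S = k - 2"
    by blast
next
  assume "\<exists>a b. {a, b} \<in> E \<and> T = {a, b} \<and> S \<subseteq> neighbours V E a \<inter> neighbours V E b \<and> card S = k - 2"
  then obtain a b where ab: "{a, b} \<in> E" "T = {a, b}" "S \<subseteq> neighbours V E a \<inter> neighbours V E b"
      "card S = k - 2"
    by blast
  have "a \<noteq> b" "a \<in> V" "b \<in> V" using ab(1) assms by auto
  moreover have "S \<subseteq> V - {a, b}"
    using ab(3) neighbours_subset[OF assms, of a] neighbours_subset[OF assms, of b] by blast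
  moreover have "edges_meeting ({a, b} \<union> S) {a, b} \<subseteq> E"
    using ab(1,3) unfolding edges_meeting_subset_iff neighbours_def by (auto simp: insert_commute)
  ultimately show "split_copy V E 2 k T S" unfolding split_copy_def using ab(2,4) by auto
qed

lemma split_copy_book_spanning_iff:
  assumes "finite V" "E \<subseteq> all_edges V" "card V = k"
  shows "split_copy V E 2 k T S \<longleftrightarrow> card T = 2 \<and> T \<subseteq> universal_vertices V E \<and> S = V - T"
proof
  assume "split_copy V E 2 k T S"
  then obtain a b where ab: "{a, b} \<in> E" "T = {a, b}" "S \<subseteq> neighbours V E a \<inter> neighbours V E b"
      "card S = k - 2"
    unfolding split_copy_book_iff[OF assms(2)] by blast
  have "a \<noteq> b" "a \<in> V" "b \<in> V" using ab(1) assms(2) by auto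
  have S_sub: "S \<subseteq> V - {a, b}"
    using ab(3) neighbours_subset[OF assms(2), of a] neighbours_subset[OF assms(2), of b] by blast
  moreover have "card (V - {a, b}) = card S"
    using ab(4) assms(3) \<open>a \<noteq> b\<close> \<open>a \<in> V\<close> \<open>b \<in> V\<close> by (simp add: card_Diff_subset)
  ultimately have S: "S = V - {a, b}"
    using assms(1) by (simp add: card_subset_eq)
  have "b \<in> neighbours V E a" "a \<in> neighbours V E b"
    using ab(1) \<open>a \<in> V\<close> \<open>b \<in> V\<close> by (auto simp: neighbours_def insert_commute)
  then have "neighbours V E a = V - {a}" "neighbours V E b = V - {b}"
    using ab(3) S neighbours_subset[OF assms(2), of a] neighbours_subset[OF assms(2), of b] by auto
  then show "card T = 2 \<and> T \<subseteq> universal_vertices V E \<and> S = V - T"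
    using ab(2) S \<open>a \<noteq> b\<close> \<open>a \<in> V\<close> \<open>b \<in> V\<close> unfolding universal_vertices_def by auto
next
  assume T: "card T = 2 \<and> T \<subseteq> universal_vertices V E \<and> S = V - T"
  then obtain a b where ab: "a \<noteq> b" "T = {a, b}" "a \<in> V" "b \<in> V"
      "neighbours V E a = V - {a}" "neighbours V E b = V - {b}"
    unfolding universal_vertices_def by (auto simp: card_2_iff)
  then have "{a, b} \<in> E" unfolding neighbours_def by (auto simp: insert_commute)
  moreover have "card S = k - 2" using T ab assms(1,3) by (simp add: card_Diff_subset)
  ultimately show "split_copy V E 2 k T S"
    unfolding split_copy_book_iff[OF assms(2)] using T ab by auto
qed

lemma contains_book_spanning_iff:
  assumes "finite V" "E \<subseteq> all_edges V" "card V = k" "2 \<le> k"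
  shows "contains (V, E) ({..<k}, split_graph 2 k) \<longleftrightarrow> 2 \<le> card (universal_vertices V E)"
proof -
  have fin: "finite (universal_vertices V E)" using assms(1) unfolding universal_vertices_def by simp
  have "(\<exists>T. card T = 2 \<and> T \<subseteq> universal_vertices V E) \<longleftrightarrow> 2 \<le> card (universal_vertices V E)"
  proof
    assume "\<exists>T. card T = 2 \<and> T \<subseteq> universal_vertices V E"
    then show "2 \<le> card (universal_vertices V E)" using card_mono[OF fin] by metis
  next
    assume "2 \<le> card (universal_vertices V E)"
    then show "\<exists>T. card T = 2 \<and> T \<subseteq> universal_vertices V E"
      by (rule obtain_subset_with_card_n) blast
  qed
  then show ?thesis
    unfolding contains_split_graph_iff[OF assms(1,4)] split_copy_book_spanning_iff[OF assms(1-3)]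
    by blast
qed

lemma card_edges_le_if_book_free_spanning:
  assumes "finite V" "E \<subseteq> all_edges V" "card V = k" "2 \<le> k"
    and "\<not> contains (V, E) ({..<k}, split_graph 2 k)"
  shows "2 * card E \<le> k * (k - 2) + 1"
proof -
  let ?U = "universal_vertices V E"
  have U: "card ?U \<le> 1" using assms contains_book_spanning_iff by fastforce
  have "card (neighbours V E v) \<le> (k - 2) + (if v \<in> ?U then 1 else 0)" if "v \<in> V" for v
  proof -
    have sub: "neighbours V E v \<subseteq> V - {v}" using assms(2) by (rule neighbours_subset)
    then have "card (neighbours V E v) \<le> k - 1"
      using that assms(1,3) card_mono[of "V - {v}"] by fastforce
    moreover have "card (neighbours V E v) = k - 1 \<Longrightarrow> v \<in> ?U"
      using that sub assms(1,3) unfolding universal_vertices_def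
      by (simp add: card_subset_eq)
    ultimately show ?thesis using assms(4) by fastforce
  qed
  then have "(\<Sum>v\<in>V. card (neighbours V E v)) \<le> (\<Sum>v\<in>V. (k - 2) + (if v \<in> ?U then 1 else 0))"
    by (rule sum_mono)
  also have "\<dots> = k * (k - 2) + card ?U"
    using assms(1,3) by (simp add: sum.distrib sum.If_cases universal_vertices_def Collect_conj_eq)
  finally show ?thesis using U sum_card_neighbours[OF assms(1,2)] by simp
qed

lemma card_copies_book_spanning_eq_1:
  assumes "finite V" "E \<subseteq> all_edges V" "card V = k" "2 \<le> k"
    and "a \<noteq> b" "universal_vertices V E = {a, b}"
  shows "card (copies (V, E) ({..<k}, split_graph 2 k)) = 1"
proof (rule card_copies_split_graph_eq_1[OF assms(1,4)])
  have "card T = 2 \<and> T \<subseteq> {a, b} \<longleftrightarrow> T = {a, b}" for T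
    using assms(5) by (auto simp: card_2_iff)
  then show "{(T, S). split_copy V E 2 k T S} = {({a, b}, V - {a, b})}"
    unfolding split_copy_book_spanning_iff[OF assms(1-3)] assms(6) by auto
qed

lemma split_copy_book_almost_spanning_iff:
  assumes "finite V" "E \<subseteq> all_edges V" "card V = k + 1" "2 \<le> k"
  shows "split_copy V E 2 k T S \<longleftrightarrow>
    (\<exists>a b r. {a, b} \<in> E \<and> r \<in> V - {a, b} \<and> non_neighbours V E a \<union> non_neighbours V E b \<subseteq> {r} \<and>
       T = {a, b} \<and> S = V - {a, b, r})"
proof
  assume "split_copy V E 2 k T S"
  then obtain a b where ab: "{a, b} \<in> E" "T = {a, b}" "S \<subseteq> neighbours V E a \<inter> neighbours V E b"
      "card S = k - 2"
    unfolding split_copy_book_iff[OF assms(2)] by blast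
  have "a \<noteq> b" "a \<in> V" "b \<in> V" using ab(1) assms(2) by auto
  have "S \<subseteq> V - {a, b}"
    using ab(3) neighbours_subset[OF assms(2), of a] neighbours_subset[OF assms(2), of b] by blast
  moreover have "card (V - {a, b}) = k - 1"
    using assms(3) \<open>a \<noteq> b\<close> \<open>a \<in> V\<close> \<open>b \<in> V\<close> by (simp add: card_Diff_subset)
  ultimately have "card (V - {a, b} - S) = 1"
    using ab(4) assms(1,4) by (simp add: card_Diff_subset finite_subset)
  then obtain r where r: "V - {a, b} - S = {r}" by (auto simp: card_1_singleton_iff)
  have "non_neighbours V E x \<subseteq> V - {a, b} - S" if "x \<in> {a, b}" for x
    using that ab(1,3) unfolding non_neighbours_def neighbours_def by (auto simp: insert_commute)
  then have "non_neighbours V E a \<union> non_neighbours V E b \<subseteq> {r}" using r by blast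
  moreover have "S = V - {a, b, r}" using r \<open>S \<subseteq> V - {a, b}\<close> by blast
  ultimately show "\<exists>a b r. {a, b} \<in> E \<and> r \<in> V - {a, b} \<and>
      non_neighbours V E a \<union> non_neighbours V E b \<subseteq> {r} \<and> T = {a, b} \<and> S = V - {a, b, r}"
    using ab(1,2) r by blast
next
  assume "\<exists>a b r. {a, b} \<in> E \<and> r \<in> V - {a, b} \<and>
      non_neighbours V E a \<union> non_neighbours V E b \<subseteq> {r} \<and> T = {a, b} \<and> S = V - {a, b, r}"
  then obtain a b r where abr: "{a, b} \<in> E" "r \<in> V - {a, b}"
      "non_neighbours V E a \<union> non_neighbours V E b \<subseteq> {r}" "T = {a, b}" "S = V - {a, b, r}"
    by blast
  have "a \<noteq> b" "a \<in> V" "b \<in> V" using abr(1) assms(2) by auto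
  have "S \<subseteq> neighbours V E a \<inter> neighbours V E b"
    using abr(3,5) unfolding non_neighbours_def neighbours_def by auto
  moreover have "card S = k - 2"
    using abr(2,5) assms(1,3) \<open>a \<noteq> b\<close> \<open>a \<in> V\<close> \<open>b \<in> V\<close> by (auto simp: card_Diff_subset card_insert_if)
  ultimately show "split_copy V E 2 k T S"
    unfolding split_copy_book_iff[OF assms(2)] using abr(1,4) by blast
qed

lemma contains_book_almost_spanningI:
  assumes "finite V" "E \<subseteq> all_edges V" "card V = k + 1" "2 \<le> k"
    and "{a, b} \<in> E" "card (non_neighbours V E a \<union> non_neighbours V E b) \<le> 1"
  shows "contains (V, E) ({..<k}, split_graph 2 k)"
proof -
  have "a \<noteq> b" "a \<in> V" "b \<in> V" using assms(2,5) by auto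
  let ?N = "non_neighbours V E a \<union> non_neighbours V E b"
  have sub: "?N \<subseteq> V - {a, b}"
    using assms(5) unfolding non_neighbours_def by (auto simp: insert_commute)
  have nonempty: "V - {a, b} \<noteq> {}"
    using assms(3,4) card_mono[of "{a, b}" V] by (auto simp: card_insert_if split: if_splits)
  have single: "\<forall>x\<in>?N. \<forall>y\<in>?N. x = y"
    using assms(1,6) by (simp add: card_le_Suc0_iff_eq finite_non_neighbours)
  obtain r where "r \<in> V - {a, b}" "?N \<subseteq> {r}"
  proof (cases "?N = {}")
    case True
    with nonempty that show ?thesis by blast
  next
    case False
    then obtain r where "r \<in> ?N" by blast
    with sub single that show ?thesis by blast
  qed
  then have "split_copy V E 2 k {a, b} (V - {a, b, r})"
    unfolding split_copy_book_almost_spanning_iff[OF assms(1-4)] using assms(5) by blast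
  then show ?thesis using contains_split_graph_iff[OF assms(1)] assms(4) by auto
qed

lemma sum_eq_card_plus_one_exists:
  fixes d :: "'a \<Rightarrow> nat"
  assumes "finite V" "\<And>v. v \<in> V \<Longrightarrow> 1 \<le> d v" "(\<Sum>v\<in>V. d v) = card V + 1"
  shows "\<exists>y\<in>V. d y = 2 \<and> (\<forall>w\<in>V - {y}. d w = 1)"
proof -
  have excess: "(\<Sum>v\<in>V. d v - 1) = 1"
    using assms by (simp add: sum_subtractf_nat)
  moreover have "(\<Sum>v\<in>V. d v - 1) = 0" if "\<forall>v\<in>V. d v - 1 = 0"
    using that by simp
  ultimately have "\<not> (\<forall>v\<in>V. d v - 1 = 0)" by linarith
  then obtain y where y: "y \<in> V" "d y - 1 \<noteq> 0" by blast
  have "(\<Sum>v\<in>V. d v - 1) = (d y - 1) + (\<Sum>v\<in>V - {y}. d v - 1)"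
    using assms(1) y(1) by (rule sum.remove)
  with excess y(2) have "d y - 1 = 1" "(\<Sum>v\<in>V - {y}. d v - 1) = 0" by linarith+
  then have "d y = 2" "\<And>w. w \<in> V \<Longrightarrow> w \<noteq> y \<Longrightarrow> d w = 1"
    using assms(1,2) y(1) by (simp_all add: le_antisym)
  with y(1) show ?thesis by blast
qed

lemma contains_book_if_universal_vertex:
  assumes "finite V" "E \<subseteq> all_edges V" "card V = k + 1" "3 \<le> k"
    and "(\<Sum>v\<in>V. card (non_neighbours V E v)) \<le> k + 2"
    and "a \<in> V" "non_neighbours V E a = {}"
  shows "contains (V, E) ({..<k}, split_graph 2 k)"
proof -
  let ?N = "non_neighbours V E"
  have "\<exists>b\<in>V - {a}. card (?N b) \<le> 1"
  proof (rule ccontr)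
    assume none: "\<not> ?thesis"
    have "2 \<le> card (?N b)" if "b \<in> V - {a}" for b
    proof -
      from none that have "\<not> card (?N b) \<le> 1" by blast
      then show ?thesis by simp
    qed
    then have "(\<Sum>b\<in>V - {a}. 2) \<le> (\<Sum>b\<in>V - {a}. card (?N b))"
      by (rule sum_mono)
    also have "\<dots> \<le> (\<Sum>v\<in>V. card (?N v))"
      using assms(1) by (intro sum_mono2) auto
    finally show False using assms(1,3-6) by simp
  qed
  then obtain b where "b \<in> V" "b \<noteq> a" "card (?N b) \<le> 1" by blast
  moreover from this have "{b, a} \<in> E"
    using assms(7) unfolding non_neighbours_def by blast
  ultimately show ?thesis
    using contains_book_almost_spanningI[OF assms(1-3), of a b] assms(4,7) by (simp add: insert_commute)
qed

text \<open>Unless some vertex is universal,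
  parity forces one vertex \<open>y\<close> with two non-neighbours \<open>x, z\<close> and all others with exactly one;
  then \<open>x\<close> and \<open>z\<close> are adjacent and both miss only \<open>y\<close>.\<close>

lemma contains_book_if_few_non_edges:
  assumes "finite V" "E \<subseteq> all_edges V" "card V = k + 1" "3 \<le> k" "even k"
    and "2 * card (all_edges V - E) \<le> k + 2"
  shows "contains (V, E) ({..<k}, split_graph 2 k)"
proof -
  let ?N = "non_neighbours V E"
  have sum_le: "(\<Sum>v\<in>V. card (?N v)) \<le> k + 2"
    using assms(6) sum_card_non_neighbours[OF assms(1)] by simp
  show ?thesis
  proof (cases "\<exists>a\<in>V. ?N a = {}")
    case True
    then show ?thesis using contains_book_if_universal_vertex[OF assms(1-4) sum_le] by blast
  next
    case False
    then have pos: "1 \<le> card (?N v)" if "v \<in> V" for v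
      using that assms(1) finite_non_neighbours[OF assms(1)] by (simp add: Suc_le_eq card_gt_0_iff)
    have "card V \<le> (\<Sum>v\<in>V. card (?N v))"
      using sum_mono[of V "\<lambda>_. 1" "\<lambda>v. card (?N v)"] pos by simp
    moreover have "(\<Sum>v\<in>V. card (?N v)) \<noteq> card V"
    proof
      assume "(\<Sum>v\<in>V. card (?N v)) = card V"
      then have "even (card V)" using sum_card_non_neighbours[OF assms(1)] by (metis dvd_triv_left)
      then show False using assms(3,5) by simp
    qed
    ultimately have "(\<Sum>v\<in>V. card (?N v)) = card V + 1"
      using sum_le assms(3) by linarith
    then obtain y where y: "y \<in> V" "card (?N y) = 2" "\<And>w. w \<in> V \<Longrightarrow> w \<noteq> y \<Longrightarrow> card (?N w) = 1"
      using sum_eq_card_plus_one_exists[of V "\<lambda>v. card (?N v)"] assms(1) pos by blast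
    then obtain x z where xz: "?N y = {x, z}" "x \<noteq> z" by (auto simp: card_2_iff)
    then have "x \<in> V" "z \<in> V" "x \<noteq> y" "z \<noteq> y" "y \<in> ?N x" "y \<in> ?N z"
      using y(1) non_neighbours_commute[of _ V E y] unfolding non_neighbours_def by auto
    moreover from this have "card (?N x) = 1" "card (?N z) = 1" using y(3) by simp_all
    ultimately have "?N x = {y}" "?N z = {y}" by (metis card_1_singletonE singletonD)+
    moreover have "{z, x} \<in> E"
      using \<open>?N x = {y}\<close> \<open>z \<in> V\<close> xz(2) \<open>z \<noteq> y\<close> unfolding non_neighbours_def by blast
    ultimately show ?thesis
      using contains_book_almost_spanningI[OF assms(1-3), of x z] assms(4) by (simp add: insert_commute)
  qed
qed

section \<open>Matchings of intervals\<close>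

definition interval_matching :: "nat \<Rightarrow> nat \<Rightarrow> nat set set" where
  "interval_matching a m = (\<lambda>i. {a + 2 * i, a + 2 * i + 1}) ` {..<m}"

lemma card_interval_matching: "card (interval_matching a m) = m"
proof -
  have "inj_on (\<lambda>i. {a + 2 * i, a + 2 * i + 1}) {..<m}"
    by (auto simp: inj_on_def doubleton_eq_iff)
  then show ?thesis unfolding interval_matching_def by (simp add: card_image)
qed

lemma interval_matching_subset_all_edges:
  "{a..<a + 2 * m} \<subseteq> V \<Longrightarrow> interval_matching a m \<subseteq> all_edges V"
  unfolding interval_matching_def by (auto intro!: subsetD[of "{a..<a + 2 * m}" V])

lemma doubleton_in_interval_matching_iff:
  "{u, v} \<in> interval_matching a m \<longleftrightarrow>
     v \<in> {a..<a + 2 * m} \<and> u = (if even (v - a) then v + 1 else v - 1)"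
proof
  assume "{u, v} \<in> interval_matching a m"
  then obtain i where "i < m" "{u, v} = {a + 2 * i, a + 2 * i + 1}"
    unfolding interval_matching_def by auto
  then show "v \<in> {a..<a + 2 * m} \<and> u = (if even (v - a) then v + 1 else v - 1)"
    by (auto simp: doubleton_eq_iff)
next
  assume v: "v \<in> {a..<a + 2 * m} \<and> u = (if even (v - a) then v + 1 else v - 1)"
  define i where "i = (v - a) div 2"
  have "i < m" using v unfolding i_def by auto
  moreover have "{u, v} = {a + 2 * i, a + 2 * i + 1}"
  proof (cases "even (v - a)")
    case True
    then have "v = a + 2 * i" using v unfolding i_def by auto
    then show ?thesis using v True by (simp add: insert_commute)
  next
    case False
    then have "v = a + 2 * i + 1" using v unfolding i_def by presburger
    then show ?thesis using v False by simp
  qed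
  ultimately show "{u, v} \<in> interval_matching a m"
    unfolding interval_matching_def by blast
qed

lemma neighbours_interval_matching:
  assumes "{a..<a + 2 * m} \<subseteq> V"
  shows "neighbours V (interval_matching a m) v =
    (if v \<in> {a..<a + 2 * m} then {if even (v - a) then v + 1 else v - 1} else {})"
proof -
  have "u \<in> V" if "{u, v} \<in> interval_matching a m" for u
    using that interval_matching_subset_all_edges[OF assms] by auto
  then show ?thesis
    unfolding neighbours_def by (auto simp: doubleton_in_interval_matching_iff)
qed

lemma card_neighbours_interval_matching:
  assumes "{a..<a + 2 * m} \<subseteq> V"
  shows "card (neighbours V (interval_matching a m) v) = (if v \<in> {a..<a + 2 * m} then 1 else 0)"
  by (simp add: neighbours_interval_matching[OF assms])

lemma neighbours_interval_matching_eq_empty_iff: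
  assumes "{a..<a + 2 * m} \<subseteq> V"
  shows "neighbours V (interval_matching a m) v = {} \<longleftrightarrow> v \<notin> {a..<a + 2 * m}"
  by (simp add: neighbours_interval_matching[OF assms])

lemma interval_matching_neighbour_unique:
  assumes "{a..<a + 2 * m} \<subseteq> V" "x \<in> {a..<a + 2 * m}" "y \<in> {a..<a + 2 * m}"
    and "neighbours V (interval_matching a m) x \<subseteq> {r}" "neighbours V (interval_matching a m) y \<subseteq> {r}"
  shows "x = y"
proof -
  have "r \<in> neighbours V (interval_matching a m) z" if "z \<in> {a..<a + 2 * m}"
    "neighbours V (interval_matching a m) z \<subseteq> {r}" for z
    using that unfolding neighbours_interval_matching[OF assms(1)] by auto
  then have "{r, x} \<in> interval_matching a m" "{r, y} \<in> interval_matching a m"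
    using assms unfolding neighbours_def by blast+
  then have "{x, r} \<in> interval_matching a m" "{y, r} \<in> interval_matching a m"
    by (simp_all add: insert_commute)
  then show ?thesis by (simp add: doubleton_in_interval_matching_iff)
qed

section \<open>The constructions\<close>

definition unique_copy_at_ex_plus_one :: "nat \<Rightarrow> 'b set \<times> 'b set set \<Rightarrow> bool" where
  "unique_copy_at_ex_plus_one n H \<longleftrightarrow>
     (\<exists>E. simple_graph {..<n} E \<and> card E = ex n H + 1 \<and> card (copies ({..<n}, E) H) = 1)"

lemma ex_eqI:
  assumes "\<And>E. E \<subseteq> all_edges {..<n} \<Longrightarrow> \<not> contains ({..<n}, E) H \<Longrightarrow> card E \<le> card W"
    and "W \<subseteq> all_edges {..<n}" "\<not> contains ({..<n}, W) H"
  shows "ex n H = card W"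
  unfolding ex_def
proof (rule Max_eqI)
  show "finite {card E |E. simple_graph {..<n} E \<and> \<not> contains ({..<n}, E) H}"
    by (rule finite_subset[of _ "{..card W}"]) (auto simp: simple_graph_iff_all_edges assms(1))
qed (use assms in \<open>auto simp: simple_graph_iff_all_edges\<close>)

lemma unique_copy_at_ex_plus_oneI:
  assumes "\<And>E. E \<subseteq> all_edges {..<n} \<Longrightarrow> \<not> contains ({..<n}, E) H \<Longrightarrow> card E \<le> card W"
    and "W \<subseteq> all_edges {..<n}" "\<not> contains ({..<n}, W) H"
    and "G \<subseteq> all_edges {..<n}" "card G = card W + 1" "card (copies ({..<n}, G) H) = 1"
  shows "unique_copy_at_ex_plus_one n H"
  unfolding unique_copy_at_ex_plus_one_def simple_graph_iff_all_edges
  using ex_eqI[OF assms(1-3)] assms(4-6) by auto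

lemma card_all_edges_odd_interval: "card (all_edges {..<2 * m + 1}) = (2 * m + 1) * m"
  by (simp add: card_all_edges choose_two)

definition star_critical :: "nat \<Rightarrow> nat set set" where
  "star_critical m = all_edges {..<2 * m + 1} - interval_matching 1 m"

definition star_extremal :: "nat \<Rightarrow> nat set set" where
  "star_extremal m = all_edges {..<2 * m + 1} - insert {0, 1} (interval_matching 1 m)"

lemma interval_matching_star_range: "{1..<1 + 2 * m} \<subseteq> {..<2 * m + 1 :: nat}"
  by auto

lemma interval_matching_star: "interval_matching 1 m \<subseteq> all_edges {..<2 * m + 1}"
  using interval_matching_star_range by (rule interval_matching_subset_all_edges)

lemma star_critical_subset: "star_critical m \<subseteq> all_edges {..<2 * m + 1}"
  unfolding star_critical_def by blast

lemma star_extremal_subset: "star_extremal m \<subseteq> all_edges {..<2 * m + 1}"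
  unfolding star_extremal_def by blast

lemma card_neighbours_star_critical:
  assumes "v < 2 * m + 1"
  shows "card (neighbours {..<2 * m + 1} (star_critical m) v) = (if v = 0 then 2 * m else 2 * m - 1)"
proof -
  have "card (neighbours {..<2 * m + 1} (star_critical m) v) =
      card {..<2 * m + 1} - 1 - card (neighbours {..<2 * m + 1} (interval_matching 1 m) v)"
    unfolding star_critical_def using assms interval_matching_star
    by (intro card_neighbours_all_edges_Diff) auto
  also have "card (neighbours {..<2 * m + 1} (interval_matching 1 m) v) = (if v = 0 then 0 else 1)"
    using card_neighbours_interval_matching[OF interval_matching_star_range, where v = v] assms by auto
  finally show ?thesis by simp
qed

lemma card_neighbours_star_extremal:
  assumes "1 \<le> m" "v < 2 * m + 1"
  shows "card (neighbours {..<2 * m + 1} (star_extremal m) v) < 2 * m"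
proof -
  let ?M = "insert {0, 1} (interval_matching 1 m)"
  have M: "?M \<subseteq> all_edges {..<2 * m + 1}" using assms(1) interval_matching_star by auto
  have "neighbours {..<2 * m + 1} ?M v \<noteq> {}"
  proof (cases "v = 0")
    case True
    then have "1 \<in> neighbours {..<2 * m + 1} ?M v" using assms(1) by (auto simp: neighbours_def)
    then show ?thesis by blast
  next
    case False
    then have "card (neighbours {..<2 * m + 1} (interval_matching 1 m) v) = 1"
      using card_neighbours_interval_matching[OF interval_matching_star_range, where v = v] assms(2) by auto
    moreover have "neighbours {..<2 * m + 1} (interval_matching 1 m) v \<subseteq> neighbours {..<2 * m + 1} ?M v"
      by (rule neighbours_mono) blast
    ultimately show ?thesis by fastforce
  qed
  then have "0 < card (neighbours {..<2 * m + 1} ?M v)" by (simp add: card_gt_0_iff finite_neighbours)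
  moreover have "card (neighbours {..<2 * m + 1} (star_extremal m) v) =
      card {..<2 * m + 1} - 1 - card (neighbours {..<2 * m + 1} ?M v)"
    unfolding star_extremal_def using assms(2) M by (intro card_neighbours_all_edges_Diff) auto
  ultimately show ?thesis using assms(1) by simp
qed

lemma card_star_critical: "card (star_critical m) = 2 * m * m"
  unfolding star_critical_def card_all_edges_Diff[OF finite_lessThan interval_matching_star]
  using card_all_edges_odd_interval[of m]
  by (simp add: card_interval_matching card_all_edges algebra_simps)

lemma card_star_extremal:
  assumes "1 \<le> m"
  shows "card (star_extremal m) + 1 = 2 * m * m"
proof -
  let ?M = "insert {0, 1} (interval_matching 1 m)"
  have "{0, 1} \<notin> interval_matching 1 m"
    by (simp add: doubleton_in_interval_matching_iff)
  moreover have "finite (interval_matching 1 m)"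
    using finite_subset[OF interval_matching_star finite_all_edges] by blast
  ultimately have "card ?M = m + 1"
    by (simp add: card_interval_matching)
  moreover have "?M \<subseteq> all_edges {..<2 * m + 1}"
    using assms interval_matching_star by auto
  ultimately have "card (star_extremal m) + (m + 1) = card (all_edges {..<2 * m + 1})"
    unfolding star_extremal_def
    by (metis card_Diff_subset card_mono finite_all_edges finite_lessThan finite_subset le_add_diff_inverse2)
  then show ?thesis using card_all_edges_odd_interval[of m] by (simp add: algebra_simps)
qed

lemma unique_copy_star_spanning:
  assumes "1 \<le> m"
  shows "unique_copy_at_ex_plus_one (2 * m + 1) ({..<2 * m + 1}, split_graph 1 (2 * m + 1))"
proof (rule unique_copy_at_ex_plus_oneI)
  fix E assume "E \<subseteq> all_edges {..<2 * m + 1}"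
    and "\<not> contains ({..<2 * m + 1}, E) ({..<2 * m + 1}, split_graph 1 (2 * m + 1))"
  then have "2 * card E \<le> (2 * m + 1) * (2 * m - 1)"
    using card_edges_le_if_star_free[of "{..<2 * m + 1}" E "2 * m + 1"] by simp
  moreover have "(2 * m + 1) * (2 * m - 1) + 1 = 4 * m * m"
    using assms by (cases m) (simp_all add: algebra_simps)
  ultimately show "card E \<le> card (star_extremal m)"
    using card_star_extremal[OF assms] by linarith
next
  show "\<not> contains ({..<2 * m + 1}, star_extremal m) ({..<2 * m + 1}, split_graph 1 (2 * m + 1))"
    using contains_star_iff[OF finite_lessThan star_extremal_subset] card_neighbours_star_extremal[OF assms]
    by fastforce
next
  show "card (copies ({..<2 * m + 1}, star_critical m) ({..<2 * m + 1}, split_graph 1 (2 * m + 1))) = 1"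
    using card_neighbours_star_critical
    by (intro card_copies_star_eq_1[OF finite_lessThan star_critical_subset, where c = 0]) auto
qed (use card_star_critical card_star_extremal[OF assms] star_critical_subset star_extremal_subset in auto)

lemma unique_copy_star_plus_clique:
  assumes "1 \<le> m"
  shows "unique_copy_at_ex_plus_one (4 * m + 1) ({..<2 * m + 1}, split_graph 1 (2 * m + 1))"
proof -
  let ?V = "{..<2 * m + 1}" and ?C = "{2 * m + 1..<4 * m + 1}"
  let ?H = "({..<2 * m + 1}, split_graph 1 (2 * m + 1))"
  have V: "{..<4 * m + 1} = ?V \<union> ?C" and disj: "?V \<inter> ?C = {}" by auto
  have "card ?C choose 2 = m * (2 * m - 1)"
    by (simp add: choose_two)
  then have card_Un: "card (E \<union> all_edges ?C) = card E + m * (2 * m - 1)" if "E \<subseteq> all_edges ?V" for E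
    using card_Un_all_edges[OF finite_lessThan finite_atLeastLessThan that disj] by simp
  have degree_C: "card (?C - {v}) < 2 * m" if "v \<in> ?C" for v
    using that assms by simp
  note neighbours = neighbours_Un_all_edges[OF _ disj]
  show ?thesis
  proof (rule unique_copy_at_ex_plus_oneI)
    fix E assume "E \<subseteq> all_edges {..<4 * m + 1}" "\<not> contains ({..<4 * m + 1}, E) ?H"
    then have "2 * card E \<le> (4 * m + 1) * (2 * m - 1)"
      using card_edges_le_if_star_free[of "{..<4 * m + 1}" E "2 * m + 1"] by simp
    moreover have "(4 * m + 1) * (2 * m - 1) + 1 = 2 * (2 * m * m) + 2 * (m * (2 * m - 1))"
      using assms by (cases m) (simp_all add: algebra_simps)
    ultimately show "card E \<le> card (star_extremal m \<union> all_edges ?C)"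
      unfolding card_Un[OF star_extremal_subset] card_star_extremal[OF assms, symmetric] by presburger
  next
    have "card (neighbours (?V \<union> ?C) (star_extremal m \<union> all_edges ?C) v) < 2 * m" if "v \<in> ?V \<union> ?C" for v
      using that card_neighbours_star_extremal[OF assms] degree_C
      unfolding neighbours[OF star_extremal_subset] by auto
    then show "\<not> contains ({..<4 * m + 1}, star_extremal m \<union> all_edges ?C) ?H"
      unfolding V
      using contains_star_iff[OF finite_UnI[OF finite_lessThan finite_atLeastLessThan]
          Un_all_edges_subset[OF star_extremal_subset], of "2 * m + 1"]
      by fastforce
  next
    show "card (copies ({..<4 * m + 1}, star_critical m \<union> all_edges ?C) ?H) = 1"
      unfolding V
      using card_neighbours_star_critical degree_C neighbours[OF star_critical_subset]
      by (intro card_copies_star_eq_1[OF finite_UnI[OF finite_lessThan finite_atLeastLessThan]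
            Un_all_edges_subset[OF star_critical_subset], where c = 0]) auto
  next
    show "star_extremal m \<union> all_edges ?C \<subseteq> all_edges {..<4 * m + 1}"
      unfolding V by (rule Un_all_edges_subset[OF star_extremal_subset])
    show "star_critical m \<union> all_edges ?C \<subseteq> all_edges {..<4 * m + 1}"
      unfolding V by (rule Un_all_edges_subset[OF star_critical_subset])
    show "card (star_critical m \<union> all_edges ?C) = card (star_extremal m \<union> all_edges ?C) + 1"
      using card_star_critical[of m] card_star_extremal[OF assms]
      unfolding card_Un[OF star_critical_subset] card_Un[OF star_extremal_subset] by simp
  qed
qed

definition book_critical_even :: "nat \<Rightarrow> nat set set" where
  "book_critical_even m = all_edges {..<2 * m} - interval_matching 2 (m - 1)"

definition book_extremal_even :: "nat \<Rightarrow> nat set set" where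
  "book_extremal_even m = all_edges {..<2 * m} - interval_matching 0 m"

lemma book_even_matchings:
  assumes "2 \<le> m"
  shows "{2..<2 + 2 * (m - 1)} \<subseteq> {..<2 * m}" "{0..<0 + 2 * m} \<subseteq> {..<2 * m}"
    "book_critical_even m \<subseteq> all_edges {..<2 * m}" "book_extremal_even m \<subseteq> all_edges {..<2 * m}"
  using assms unfolding book_critical_even_def book_extremal_even_def by auto

lemma universal_vertices_book_even:
  assumes "2 \<le> m"
  shows "universal_vertices {..<2 * m} (book_critical_even m) = {0, 1}"
    "universal_vertices {..<2 * m} (book_extremal_even m) = {}"
proof -
  note ranges = book_even_matchings(1,2)[OF assms]
  show "universal_vertices {..<2 * m} (book_critical_even m) = {0, 1}"
    "universal_vertices {..<2 * m} (book_extremal_even m) = {}"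
    using assms
    unfolding book_critical_even_def book_extremal_even_def
      universal_vertices_all_edges_Diff[OF interval_matching_subset_all_edges[OF ranges(1)]]
      universal_vertices_all_edges_Diff[OF interval_matching_subset_all_edges[OF ranges(2)]]
      neighbours_interval_matching_eq_empty_iff[OF ranges(1)]
      neighbours_interval_matching_eq_empty_iff[OF ranges(2)]
    by auto
qed

lemma card_book_even:
  assumes "2 \<le> m"
  shows "card (book_extremal_even m) = m * (2 * m - 1) - m"
    "card (book_critical_even m) = card (book_extremal_even m) + 1"
proof -
  note M_G = interval_matching_subset_all_edges[OF book_even_matchings(1)[OF assms]]
  note M_W = interval_matching_subset_all_edges[OF book_even_matchings(2)[OF assms]]
  have card_V: "card (all_edges {..<2 * m}) = m * (2 * m - 1)"
    by (simp add: card_all_edges choose_two)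
  show card_W: "card (book_extremal_even m) = m * (2 * m - 1) - m"
    unfolding book_extremal_even_def card_all_edges_Diff[OF finite_lessThan M_W]
    using card_V by (simp add: card_all_edges card_interval_matching)
  have "card (book_critical_even m) = m * (2 * m - 1) - (m - 1)"
    unfolding book_critical_even_def card_all_edges_Diff[OF finite_lessThan M_G]
    using card_V by (simp add: card_all_edges card_interval_matching)
  moreover have "m \<le> m * (2 * m - 1)" using assms by simp
  ultimately show "card (book_critical_even m) = card (book_extremal_even m) + 1"
    unfolding card_W using assms by linarith
qed

lemma unique_copy_book_even_order:
  assumes "2 \<le> m"
  shows "unique_copy_at_ex_plus_one (2 * m) ({..<2 * m}, split_graph 2 (2 * m))"
proof (rule unique_copy_at_ex_plus_oneI)
  let ?V = "{..<2 * m}" and ?H = "({..<2 * m}, split_graph 2 (2 * m))"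
  fix E assume "E \<subseteq> all_edges ?V" "\<not> contains (?V, E) ?H"
  then have "2 * card E \<le> 2 * m * (2 * m - 2) + 1"
    using card_edges_le_if_book_free_spanning[of ?V E "2 * m"] assms by simp
  moreover have "2 * m * (2 * m - 2) = 2 * (m * (2 * m - 1) - m)"
    using assms by (cases m) (simp_all add: algebra_simps)
  ultimately show "card E \<le> card (book_extremal_even m)"
    unfolding card_book_even(1)[OF assms] by presburger
next
  show "\<not> contains ({..<2 * m}, book_extremal_even m) ({..<2 * m}, split_graph 2 (2 * m))"
    using assms contains_book_spanning_iff[OF finite_lessThan book_even_matchings(4)[OF assms]]
      universal_vertices_book_even(2)[OF assms] by simp
  show "card (copies ({..<2 * m}, book_critical_even m) ({..<2 * m}, split_graph 2 (2 * m))) = 1"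
    using assms universal_vertices_book_even(1)[OF assms]
    by (intro card_copies_book_spanning_eq_1[OF finite_lessThan book_even_matchings(3)[OF assms]]) auto
qed (use assms book_even_matchings card_book_even in auto)

text \<open>The critical graph misses the path \<open>0 - 1 - 2\<close>, so its only book has spine \<open>{0, 2}\<close> with
  \<open>1\<close> as the single common non-neighbour; the extremal graph misses the whole triangle.\<close>

definition book_critical_odd :: "nat \<Rightarrow> nat set set" where
  "book_critical_odd m = all_edges {..<2 * m + 1} - ({{0, 1}, {1, 2}} \<union> interval_matching 3 (m - 1))"

definition book_extremal_odd :: "nat \<Rightarrow> nat set set" where
  "book_extremal_odd m = all_edges {..<2 * m + 1} - ({{0, 1}, {1, 2}, {0, 2}} \<union> interval_matching 3 (m - 1))"

lemma book_critical_odd_subset: "book_critical_odd m \<subseteq> all_edges {..<2 * m + 1}"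
  unfolding book_critical_odd_def by blast

lemma book_extremal_odd_subset: "book_extremal_odd m \<subseteq> all_edges {..<2 * m + 1}"
  unfolding book_extremal_odd_def by blast

context
  fixes m :: nat
  assumes m: "2 \<le> m"
begin

lemma book_odd_matching_range: "{3..<3 + 2 * (m - 1)} \<subseteq> {..<2 * m + 1}"
  using m by auto

lemma book_odd_non_edges:
  "{{0, 1}, {1, 2}} \<union> interval_matching 3 (m - 1) \<subseteq> all_edges {..<2 * m + 1}"
  "{{0, 1}, {1, 2}, {0, 2}} \<union> interval_matching 3 (m - 1) \<subseteq> all_edges {..<2 * m + 1}"
  using m interval_matching_subset_all_edges[OF book_odd_matching_range] by auto

lemma non_neighbours_book_odd:
  assumes "v < 2 * m + 1"
  shows "non_neighbours {..<2 * m + 1} (book_critical_odd m) v =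
      neighbours {..<2 * m + 1} {{0, 1}, {1, 2}} v \<union>
      neighbours {..<2 * m + 1} (interval_matching 3 (m - 1)) v"
    "non_neighbours {..<2 * m + 1} (book_extremal_odd m) v =
      neighbours {..<2 * m + 1} {{0, 1}, {1, 2}, {0, 2}} v \<union>
      neighbours {..<2 * m + 1} (interval_matching 3 (m - 1)) v"
  using non_neighbours_all_edges_Diff[OF book_odd_non_edges(1), of v]
    non_neighbours_all_edges_Diff[OF book_odd_non_edges(2), of v] assms
  unfolding book_critical_odd_def book_extremal_odd_def neighbours_Un[symmetric] by simp_all

lemma neighbours_book_odd_matching:
  assumes "v < 2 * m + 1"
  shows "neighbours {..<2 * m + 1} (interval_matching 3 (m - 1)) v = {} \<longleftrightarrow> v < 3"
    "neighbours {..<2 * m + 1} (interval_matching 3 (m - 1)) v \<subseteq> {3..}"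
proof -
  have "3 \<le> (if even (v - 3) then v + 1 else v - 1)" if "3 \<le> v"
    using that by (cases "v = 3") auto
  then show "neighbours {..<2 * m + 1} (interval_matching 3 (m - 1)) v = {} \<longleftrightarrow> v < 3"
    "neighbours {..<2 * m + 1} (interval_matching 3 (m - 1)) v \<subseteq> {3..}"
    using assms m unfolding neighbours_interval_matching[OF book_odd_matching_range] by auto
qed

lemma non_neighbours_book_odd_small:
  "non_neighbours {..<2 * m + 1} (book_critical_odd m) 0 = {1}"
  "non_neighbours {..<2 * m + 1} (book_critical_odd m) 1 = {0, 2}"
  "non_neighbours {..<2 * m + 1} (book_critical_odd m) 2 = {1}"
  "v < 3 \<Longrightarrow> non_neighbours {..<2 * m + 1} (book_extremal_odd m) v = {0, 1, 2} - {v}"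
proof -
  have V: "0 < 2 * m + 1" "1 < 2 * m + 1" "2 < 2 * m + 1" using m by auto
  have M: "neighbours {..<2 * m + 1} (interval_matching 3 (m - 1)) v = {}" if "v < 3" for v
    using that m neighbours_book_odd_matching(1)[of v] by simp
  show "non_neighbours {..<2 * m + 1} (book_critical_odd m) 0 = {1}"
    unfolding non_neighbours_book_odd(1)[OF V(1)]
    using V M[of 0] by (auto simp: neighbours_def doubleton_eq_iff)
  show "non_neighbours {..<2 * m + 1} (book_critical_odd m) 1 = {0, 2}"
    unfolding non_neighbours_book_odd(1)[OF V(2)]
    using V M[of 1] by (auto simp: neighbours_def doubleton_eq_iff)
  show "non_neighbours {..<2 * m + 1} (book_critical_odd m) 2 = {1}"
    unfolding non_neighbours_book_odd(1)[OF V(3)]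
    using V M[of 2] by (auto simp: neighbours_def doubleton_eq_iff)
  show "non_neighbours {..<2 * m + 1} (book_extremal_odd m) v = {0, 1, 2} - {v}" if "v < 3"
  proof -
    have "v < 2 * m + 1" using that V by linarith
    then show ?thesis
      unfolding non_neighbours_book_odd(2)[OF \<open>v < 2 * m + 1\<close>]
    using that V M[OF that] by (auto simp: neighbours_def doubleton_eq_iff)
  qed
qed

lemma non_neighbours_book_odd_large:
  assumes "v < 2 * m + 1" "3 \<le> v"
  shows "non_neighbours {..<2 * m + 1} (book_critical_odd m) v =
      neighbours {..<2 * m + 1} (interval_matching 3 (m - 1)) v"
    "non_neighbours {..<2 * m + 1} (book_extremal_odd m) v =
      neighbours {..<2 * m + 1} (interval_matching 3 (m - 1)) v"
  using assms non_neighbours_book_odd[OF assms(1)] by (auto simp: neighbours_def doubleton_eq_iff)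

lemma book_odd_matching_vertex: "3 \<le> v \<Longrightarrow> v < 2 * m + 1 \<Longrightarrow> v \<in> {3..<3 + 2 * (m - 1)}"
  using m by auto

lemma book_odd_order_split_copy_iff:
  assumes "E \<subseteq> all_edges {..<2 * m + 1}"
  shows "split_copy {..<2 * m + 1} E 2 (2 * m) T S \<longleftrightarrow>
    (\<exists>a b r. {a, b} \<in> E \<and> r \<in> {..<2 * m + 1} - {a, b} \<and>
       non_neighbours {..<2 * m + 1} E a \<union> non_neighbours {..<2 * m + 1} E b \<subseteq> {r} \<and>
       T = {a, b} \<and> S = {..<2 * m + 1} - {a, b, r})"
  using m by (intro split_copy_book_almost_spanning_iff[OF finite_lessThan assms]) auto

lemma book_extremal_odd_book_free:
  "\<not> contains ({..<2 * m + 1}, book_extremal_odd m) ({..<2 * m}, split_graph 2 (2 * m))"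
proof
  let ?N = "non_neighbours {..<2 * m + 1} (book_extremal_odd m)"
  assume "contains ({..<2 * m + 1}, book_extremal_odd m) ({..<2 * m}, split_graph 2 (2 * m))"
  then obtain T S where "split_copy {..<2 * m + 1} (book_extremal_odd m) 2 (2 * m) T S"
    using contains_split_graph_iff[OF finite_lessThan, of 2 "2 * m"] m by auto
  then obtain a b r where ab: "{a, b} \<in> book_extremal_odd m" and N: "?N a \<union> ?N b \<subseteq> {r}"
    unfolding book_odd_order_split_copy_iff[OF book_extremal_odd_subset] by blast
  have "a < 2 * m + 1" "b < 2 * m + 1" "a \<noteq> b" using subsetD[OF book_extremal_odd_subset ab] by auto
  have "3 \<le> x" if "x < 2 * m + 1" "?N x \<subseteq> {r}" for x
  proof (rule ccontr)
    assume "\<not> 3 \<le> x"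
    then have "x < 3" by simp
    then have "?N x = {0, 1, 2} - {x}" by (rule non_neighbours_book_odd_small(4))
    moreover have "x \<in> {0, 1, 2}" using \<open>x < 3\<close> by auto
    ultimately have "card (?N x) = 2" by simp
    moreover have "card (?N x) \<le> 1" using card_mono[OF _ that(2)] by simp
    ultimately show False by simp
  qed
  then have "3 \<le> a" "3 \<le> b" using N \<open>a < 2 * m + 1\<close> \<open>b < 2 * m + 1\<close> by auto
  then have "a = b"
    using N \<open>a < 2 * m + 1\<close> \<open>b < 2 * m + 1\<close> non_neighbours_book_odd_large(2)
    by (intro interval_matching_neighbour_unique[OF book_odd_matching_range book_odd_matching_vertex
          book_odd_matching_vertex, where r = r]) simp_all
  with \<open>a \<noteq> b\<close> show False ..
qed

lemma book_critical_odd_copy_spine: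
  assumes "{a, b} \<in> book_critical_odd m"
    and "non_neighbours {..<2 * m + 1} (book_critical_odd m) a \<union>
      non_neighbours {..<2 * m + 1} (book_critical_odd m) b \<subseteq> {r}"
  shows "{a, b} = {0, 2}" "r = 1"
proof -
  let ?N = "non_neighbours {..<2 * m + 1} (book_critical_odd m)"
  have "a < 2 * m + 1" "b < 2 * m + 1" "a \<noteq> b"
    using subsetD[OF book_critical_odd_subset assms(1)] by auto
  then have ab: "x < 2 * m + 1" "?N x \<subseteq> {r}" if "x \<in> {a, b}" for x
    using that assms(2) by blast+
  have r_large: "3 \<le> r" if "x \<in> {a, b}" "3 \<le> x" for x
  proof -
    have "?N x \<noteq> {}" "?N x \<subseteq> {3..}"
      using ab(1)[OF that(1)] that(2) neighbours_book_odd_matching[of x]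
        non_neighbours_book_odd_large(1)[of x]
      by simp_all
    then show ?thesis using ab(2)[OF that(1)] by blast
  qed
  have r_1: "r = 1" if "x \<in> {a, b}" "x \<in> {0, 2}" for x
    using ab(2)[OF that(1)] that(2) non_neighbours_book_odd_small(1,3) by auto
  have not_1: "x \<noteq> 1" if "x \<in> {a, b}" for x
    using ab(2)[OF that] non_neighbours_book_odd_small(2) by auto
  have "\<not> (3 \<le> a \<and> 3 \<le> b)"
  proof
    assume "3 \<le> a \<and> 3 \<le> b"
    then have "a = b"
      using ab[of a] ab[of b] non_neighbours_book_odd_large(1)
      by (intro interval_matching_neighbour_unique[OF book_odd_matching_range book_odd_matching_vertex
            book_odd_matching_vertex, where r = r]) simp_all
    with \<open>a \<noteq> b\<close> show False ..
  qed
  then have "a < 3 \<or> b < 3" by linarith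
  then have "r = 1" using r_1 not_1 by fastforce
  then have "a < 3" "b < 3" using r_large by fastforce+
  moreover have "a \<noteq> 1" "b \<noteq> 1" using not_1 by simp_all
  ultimately have "a \<in> {0, 2}" "b \<in> {0, 2}" by auto
  then show "{a, b} = {0, 2}" using \<open>a \<noteq> b\<close> by auto
  show "r = 1" by fact
qed

lemma book_critical_odd_split_copy_iff:
  "split_copy {..<2 * m + 1} (book_critical_odd m) 2 (2 * m) T S \<longleftrightarrow>
     T = {0, 2} \<and> S = {..<2 * m + 1} - {0, 2, 1}"
proof
  assume "split_copy {..<2 * m + 1} (book_critical_odd m) 2 (2 * m) T S"
  then obtain a b r where spine: "{a, b} \<in> book_critical_odd m"
      "non_neighbours {..<2 * m + 1} (book_critical_odd m) a \<union>
        non_neighbours {..<2 * m + 1} (book_critical_odd m) b \<subseteq> {r}"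
    and TS: "T = {a, b}" "S = {..<2 * m + 1} - {a, b, r}"
    unfolding book_odd_order_split_copy_iff[OF book_critical_odd_subset] by blast
  moreover have "{a, b, r} = {a, b} \<union> {r}" by blast
  ultimately show "T = {0, 2} \<and> S = {..<2 * m + 1} - {0, 2, 1}"
    using book_critical_odd_copy_spine[OF spine] by (simp add: insert_commute)
next
  have "{0, 2} \<in> book_critical_odd m"
    using m unfolding book_critical_odd_def
    by (auto simp: doubleton_eq_iff doubleton_in_interval_matching_iff)
  moreover have "non_neighbours {..<2 * m + 1} (book_critical_odd m) 0 \<union>
      non_neighbours {..<2 * m + 1} (book_critical_odd m) 2 \<subseteq> {1}"
    using non_neighbours_book_odd_small(1,3) by simp
  moreover have "1 \<in> {..<2 * m + 1} - {0, 2}" using m by simp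
  ultimately show "T = {0, 2} \<and> S = {..<2 * m + 1} - {0, 2, 1} \<Longrightarrow>
      split_copy {..<2 * m + 1} (book_critical_odd m) 2 (2 * m) T S"
    unfolding book_odd_order_split_copy_iff[OF book_critical_odd_subset] by blast
qed

lemma card_book_odd_non_edges:
  "card ({{0, 1}, {1, 2}} \<union> interval_matching 3 (m - 1)) = m + 1"
  "card ({{0, 1}, {1, 2}, {0, 2}} \<union> interval_matching 3 (m - 1)) = m + 2"
proof -
  have fin: "finite (interval_matching 3 (m - 1))"
    using finite_subset[OF interval_matching_subset_all_edges[OF book_odd_matching_range] finite_all_edges]
    by blast
  have "{0, 1} \<notin> interval_matching 3 (m - 1)" "{1, 2} \<notin> interval_matching 3 (m - 1)"
    "{0, 2} \<notin> interval_matching 3 (m - 1)"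
    by (simp_all add: doubleton_in_interval_matching_iff)
  then show "card ({{0, 1}, {1, 2}} \<union> interval_matching 3 (m - 1)) = m + 1"
    "card ({{0, 1}, {1, 2}, {0, 2}} \<union> interval_matching 3 (m - 1)) = m + 2"
    using fin m by (simp_all add: card_interval_matching doubleton_eq_iff)
qed

lemma unique_copy_book_odd_order:
  "unique_copy_at_ex_plus_one (2 * m + 1) ({..<2 * m}, split_graph 2 (2 * m))"
proof (rule unique_copy_at_ex_plus_oneI)
  have card_V: "card (all_edges {..<2 * m + 1}) = (2 * m + 1) * m"
    by (rule card_all_edges_odd_interval)
  have card_W: "card (book_extremal_odd m) = (2 * m + 1) * m - (m + 2)"
    unfolding book_extremal_odd_def card_all_edges_Diff[OF finite_lessThan book_odd_non_edges(2)]
    using card_V card_book_odd_non_edges(2) by (simp add: card_all_edges)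
  fix E assume "E \<subseteq> all_edges {..<2 * m + 1}"
    and "\<not> contains ({..<2 * m + 1}, E) ({..<2 * m}, split_graph 2 (2 * m))"
  then have "\<not> 2 * card (all_edges {..<2 * m + 1} - E) \<le> 2 * m + 2"
    using contains_book_if_few_non_edges[where V = "{..<2 * m + 1}" and E = E and k = "2 * m"] m by auto
  moreover have "card (all_edges {..<2 * m + 1} - E) = card (all_edges {..<2 * m + 1}) - card E"
    using \<open>E \<subseteq> _\<close> by (simp add: card_Diff_subset finite_subset[OF _ finite_all_edges])
  moreover have "card E \<le> card (all_edges {..<2 * m + 1})"
    using \<open>E \<subseteq> _\<close> by (simp add: card_mono finite_all_edges)
  ultimately show "card E \<le> card (book_extremal_odd m)"
    unfolding card_W card_V by linarith
next
  show "card (book_critical_odd m) = card (book_extremal_odd m) + 1"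
    unfolding book_critical_odd_def book_extremal_odd_def
      card_all_edges_Diff[OF finite_lessThan book_odd_non_edges(1)]
      card_all_edges_Diff[OF finite_lessThan book_odd_non_edges(2)] card_book_odd_non_edges
      card_all_edges[OF finite_lessThan, symmetric] card_all_edges_odd_interval
  proof -
    have "m * 1 \<le> m * (2 * m)" using m by (intro mult_le_mono2) simp
    then show "(2 * m + 1) * m - (m + 1) = (2 * m + 1) * m - (m + 2) + 1"
      using m by (simp add: algebra_simps, linarith)
  qed
next
  show "card (copies ({..<2 * m + 1}, book_critical_odd m) ({..<2 * m}, split_graph 2 (2 * m))) = 1"
    using book_critical_odd_split_copy_iff m
    by (intro card_copies_split_graph_eq_1[OF finite_lessThan, where T\<^sub>0 = "{0, 2}"]) auto
qed (use book_extremal_odd_book_free book_critical_odd_subset book_extremal_odd_subset in auto)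

end

theorem corollary3:
  fixes k :: nat
  assumes "k \<ge> 4"
  shows "\<exists>HE :: nat set set. simple_graph {..<k} HE \<and>
           (\<exists>n1 n2 :: nat. n1 \<noteq> n2 \<and> 0 < n1 \<and> 0 < n2 \<and>
              (\<forall>n \<in> {n1, n2}. \<exists>E :: nat set set. simple_graph {..<n} E \<and>
                  card E = ex n ({..<k}, HE) + 1 \<and>
                  card (copies ({..<n}, E) ({..<k}, HE)) = 1))"
proof -
  obtain t n1 n2 where "n1 \<noteq> n2" "0 < n1" "0 < n2"
    and "\<forall>n \<in> {n1, n2}. unique_copy_at_ex_plus_one n ({..<k}, split_graph t k)"
  proof (cases "even k")
    case True
    then obtain m where k: "k = 2 * m" and "2 \<le> m" using assms by (auto elim!: evenE)
    then show thesis
      using that[of k "k + 1" 2] unique_copy_book_even_order unique_copy_book_odd_order by simp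
  next
    case False
    then obtain m where k: "k = 2 * m + 1" and "1 \<le> m" using assms by (auto elim!: oddE)
    then show thesis
      using that[of k "4 * m + 1" 1] unique_copy_star_spanning unique_copy_star_plus_clique by simp
  qed
  then show ?thesis
    unfolding unique_copy_at_ex_plus_one_def using simple_graph_split_graph by blast
qed

end
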